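(* A tree $T$ is minor-minimal for the spectator floor (i.e., no proper minor of $T$ has the same spectator floor as $T$) if and only if no edge lies in the intersection of all diametric paths in $T$.
   Context: All graphs are finite, have at least one vertex, have no loops, and may have multiple (parallel) edges. A diametric path is a path whose length (number of edges) equals the diameter of the graph. A minor of $H$ is any graph obtained from $H$ by a sequence of: deleting an isolated vertex, deleting an edge, contracting an edge that has no edge parallel to it. A unique shortest path is a shortest $u$–$v$ path $P$ such that every $u$–$v$ path with the same number of vertices is identical to $P$, where two paths with different edge sequences are different even if their vertex sequences agree; a single vertex is a unique shortest path. The parade number $\mathrm{usp}(G)$ is the largest number of vertices of a unique shortest path in $G$. The spectator number is $\mathrm{sp}(G)=|V(G)|-\mathrm{usp}(G)$. The spectator floor $\lfloor \mathrm{sp}\rfloor(G)$ is the minimum of $\mathrm{sp}(H)$ over all graphs $H$ of which $G$ is a minor. *)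

theory Defs
  imports Main
begin

text \<open>Finite multigraphs (no loops, parallel edges allowed). Every finite
  multigraph is isomorphic to one of this form.\<close>

record mgraph =
  verts :: "nat set"
  edges :: "nat set"
  inc :: "nat \<Rightarrow> nat set"

definition wf_graph :: "mgraph \<Rightarrow> bool" where
  "wf_graph G \<longleftrightarrow> finite (verts G) \<and> verts G \<noteq> {} \<and> finite (edges G) \<and>
     (\<forall>e\<in>edges G. inc G e \<subseteq> verts G \<and> card (inc G e) = 2)"

definition graph_iso :: "mgraph \<Rightarrow> mgraph \<Rightarrow> bool" where
  "graph_iso G H \<longleftrightarrow> (\<exists>f g. bij_betw f (verts G) (verts H) \<and> bij_betw g (edges G) (edges H) \<and>
     (\<forall>e\<in>edges G. inc H (g e) = f ` inc G e))"

definition minor_step :: "mgraph \<Rightarrow> mgraph \<Rightarrow> bool" where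
  "minor_step H G \<longleftrightarrow>
     (\<exists>v\<in>verts H. (\<forall>e\<in>edges H. v \<notin> inc H e) \<and> verts H \<noteq> {v} \<and>
        G = H\<lparr>verts := verts H - {v}\<rparr>)
   \<or> (\<exists>e\<in>edges H. G = H\<lparr>edges := edges H - {e}\<rparr>)
   \<or> (\<exists>e\<in>edges H. \<exists>u w. inc H e = {u, w} \<and> u \<noteq> w \<and>
        (\<forall>f\<in>edges H. f \<noteq> e \<longrightarrow> inc H f \<noteq> inc H e) \<and>
        G = \<lparr>verts = verts H - {w}, edges = edges H - {e},
             inc = (\<lambda>f. (\<lambda>x. if x = w then u else x) ` inc H f)\<rparr>)"

definition is_minor :: "mgraph \<Rightarrow> mgraph \<Rightarrow> bool" where
  "is_minor G H \<longleftrightarrow> (\<exists>G'. minor_step\<^sup>*\<^sup>* H G' \<and> graph_iso G G')"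

definition is_proper_minor :: "mgraph \<Rightarrow> mgraph \<Rightarrow> bool" where
  "is_proper_minor G H \<longleftrightarrow> (\<exists>G'. minor_step\<^sup>+\<^sup>+ H G' \<and> graph_iso G G')"

definition is_path :: "mgraph \<Rightarrow> nat list \<Rightarrow> nat list \<Rightarrow> bool" where
  "is_path G vs es \<longleftrightarrow> vs \<noteq> [] \<and> distinct vs \<and> set vs \<subseteq> verts G \<and>
     length vs = length es + 1 \<and>
     (\<forall>i<length es. es ! i \<in> edges G \<and> inc G (es ! i) = {vs ! i, vs ! Suc i})"

definition is_usp :: "mgraph \<Rightarrow> nat list \<Rightarrow> nat list \<Rightarrow> bool" where
  "is_usp G vs es \<longleftrightarrow> is_path G vs es \<and>
     (\<forall>vs' es'. is_path G vs' es' \<and> hd vs' = hd vs \<and> last vs' = last vs \<longrightarrow>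
        length vs \<le> length vs') \<and>
     (\<forall>vs' es'. is_path G vs' es' \<and> hd vs' = hd vs \<and> last vs' = last vs \<and>
        length vs' = length vs \<longrightarrow> vs' = vs \<and> es' = es)"

definition usp :: "mgraph \<Rightarrow> nat" where
  "usp G = Max {length vs | vs es. is_usp G vs es}"

definition sp :: "mgraph \<Rightarrow> nat" where
  "sp G = card (verts G) - usp G"

definition sfloor :: "mgraph \<Rightarrow> nat" where
  "sfloor G = (LEAST k. \<exists>H. wf_graph H \<and> is_minor G H \<and> sp H = k)"

definition connected_graph :: "mgraph \<Rightarrow> bool" where
  "connected_graph G \<longleftrightarrow> (\<forall>u\<in>verts G. \<forall>v\<in>verts G.
     \<exists>vs es. is_path G vs es \<and> hd vs = u \<and> last vs = v)"

definition is_cycle :: "mgraph \<Rightarrow> nat list \<Rightarrow> nat list \<Rightarrow> bool" where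
  "is_cycle G vs es \<longleftrightarrow> length vs \<ge> 2 \<and> distinct vs \<and> set vs \<subseteq> verts G \<and>
     length es = length vs \<and> distinct es \<and>
     (\<forall>i<length es. es ! i \<in> edges G \<and>
        inc G (es ! i) = {vs ! i, vs ! ((Suc i) mod length vs)})"

definition is_tree :: "mgraph \<Rightarrow> bool" where
  "is_tree G \<longleftrightarrow> wf_graph G \<and> connected_graph G \<and> \<not> (\<exists>vs es. is_cycle G vs es)"

definition dist :: "mgraph \<Rightarrow> nat \<Rightarrow> nat \<Rightarrow> nat" where
  "dist G u v = (LEAST n. \<exists>vs es. is_path G vs es \<and> hd vs = u \<and> last vs = v \<and> length es = n)"

definition diameter :: "mgraph \<Rightarrow> nat" where
  "diameter G = Max {dist G u v | u v. u \<in> verts G \<and> v \<in> verts G}"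

definition diametric_path :: "mgraph \<Rightarrow> nat list \<Rightarrow> nat list \<Rightarrow> bool" where
  "diametric_path G vs es \<longleftrightarrow> is_path G vs es \<and> length es = diameter G"

definition sfloor_minor_minimal :: "mgraph \<Rightarrow> bool" where
  "sfloor_minor_minimal G \<longleftrightarrow>
     (\<forall>H. wf_graph H \<and> is_proper_minor H G \<longrightarrow> sfloor H \<noteq> sfloor G)"

end

theory Submission
  imports Defs
begin

text \<open>If a connected graph \<open>G\<close> is a minor of \<open>H\<close>, then \<open>|V(G)| \<le> sp(H) + 1 + diam(G)\<close>.
  To see this, follow the minor operations from \<open>H\<close> to \<open>G\<close>, carrying a set of vertex pairs
  that lie in pairwise different components, valued by the sum of (distance + 1) over the pairs.
  It starts as the ends of a longest unique shortest path of \<open>H\<close>, with value \<open>usp(H)\<close>.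
  Deleting an edge never lowers the value (a pair it separates is split into two pairs across
  the edge); deleting an isolated vertex or contracting an edge lowers it by at most one, and
  removes one vertex. In the connected graph \<open>G\<close> only one pair is left, of value at most
  \<open>diam(G) + 1\<close>.

  In a tree every path is the unique shortest path between its ends, so the bound is attained:
  \<open>sfloor(T) = |V(T)| - 1 - diam(T)\<close>. If an edge lies on every diametric path, contracting it
  lowers both \<open>|V|\<close> and \<open>diam\<close> by one and keeps \<open>sfloor\<close>. Otherwise every proper minor of
  \<open>T\<close> is a minor of \<open>T/e\<close> or of \<open>T\<close> with \<open>e\<close> moved to the end of a diametric path avoiding
  it, for some edge \<open>e\<close>; both graphs have spectator number at most \<open>|V(T)| - diam(T) - 2\<close>.\<close>

section \<open>Walks and paths\<close>

inductive walk :: "mgraph \<Rightarrow> nat \<Rightarrow> nat \<Rightarrow> nat \<Rightarrow> bool" for G where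
  walk_refl: "a \<in> verts G \<Longrightarrow> walk G a a 0"
| walk_step: "a \<in> verts G \<Longrightarrow> g \<in> edges G \<Longrightarrow> inc G g = {a, c} \<Longrightarrow> walk G c b n \<Longrightarrow>
    walk G a b (Suc n)"

definition reachable :: "mgraph \<Rightarrow> nat \<Rightarrow> nat \<Rightarrow> bool" where
  "reachable G a b \<longleftrightarrow> (\<exists>n. walk G a b n)"

definition subgraph :: "mgraph \<Rightarrow> mgraph \<Rightarrow> bool" where
  "subgraph G H \<longleftrightarrow> verts G \<subseteq> verts H \<and> edges G \<subseteq> edges H \<and> (\<forall>g\<in>edges G. inc G g = inc H g)"

definition del_edges :: "mgraph \<Rightarrow> nat set \<Rightarrow> mgraph" where
  "del_edges G F = G\<lparr>edges := edges G - F\<rparr>"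

lemma del_edges_simps [simp]:
  "verts (del_edges G F) = verts G" "edges (del_edges G F) = edges G - F" "inc (del_edges G F) = inc G"
  unfolding del_edges_def by simp_all

lemma walk_verts: "walk G a b n \<Longrightarrow> a \<in> verts G \<and> b \<in> verts G"
  by (induction rule: walk.induct) auto

lemma walk_append: "walk G a b m \<Longrightarrow> walk G b c n \<Longrightarrow> walk G a c (m + n)"
  by (induction rule: walk.induct) (auto intro: walk.intros)

lemma walk_edge: "g \<in> edges G \<Longrightarrow> inc G g = {a, c} \<Longrightarrow> a \<in> verts G \<Longrightarrow> c \<in> verts G \<Longrightarrow> walk G a c 1"
  using walk_step[OF _ _ _ walk_refl] by (metis One_nat_def)

lemma walk_sym: "walk G a b n \<Longrightarrow> walk G b a n"
proof (induction rule: walk.induct)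
  case (walk_refl a)
  then show ?case by (rule walk.walk_refl)
next
  case (walk_step a g c b n)
  have "walk G c a 1"
    using walk_step walk_edge[of g G c a] walk_verts[OF walk_step(4)] by (auto simp: insert_commute)
  from walk_append[OF walk_step.IH this] show ?case by simp
qed

lemma walk_subgraph: "walk G a b n \<Longrightarrow> subgraph G H \<Longrightarrow> walk H a b n"
  unfolding subgraph_def by (induction rule: walk.induct) (auto intro: walk.intros)

lemma reachable_refl: "a \<in> verts G \<Longrightarrow> reachable G a a"
  unfolding reachable_def by (auto intro: walk_refl)

lemma reachable_sym: "reachable G a b \<Longrightarrow> reachable G b a"
  unfolding reachable_def by (auto intro: walk_sym)

lemma reachable_trans: "reachable G a b \<Longrightarrow> reachable G b c \<Longrightarrow> reachable G a c"
  unfolding reachable_def by (auto intro: walk_append)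

lemma reachable_verts: "reachable G a b \<Longrightarrow> a \<in> verts G \<and> b \<in> verts G"
  unfolding reachable_def using walk_verts by blast

lemma reachable_edge:
  "g \<in> edges G \<Longrightarrow> inc G g = {a, c} \<Longrightarrow> a \<in> verts G \<Longrightarrow> c \<in> verts G \<Longrightarrow> reachable G a c"
  unfolding reachable_def using walk_edge by blast

lemma reachable_subgraph: "reachable G a b \<Longrightarrow> subgraph G H \<Longrightarrow> reachable H a b"
  unfolding reachable_def using walk_subgraph by blast

lemma subgraph_del_edges: "subgraph (del_edges G F) G"
  unfolding subgraph_def by auto

lemma walk_del_edge_cases:
  assumes "walk G a b n"
  shows "reachable (del_edges G {e}) a b \<or>
    (\<exists>x y. inc G e = {x, y} \<and> reachable (del_edges G {e}) a x \<and> reachable (del_edges G {e}) y b)"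
  using assms
proof (induction rule: walk.induct)
  case (walk_refl a)
  then show ?case by (auto intro: reachable_refl)
next
  case (walk_step a g c b n)
  let ?D = "del_edges G {e}"
  have a: "a \<in> verts ?D" and c: "c \<in> verts ?D" using walk_step walk_verts by auto
  show ?case
  proof (cases "g = e")
    case False
    then have "reachable ?D a c" using reachable_edge[of g ?D a c] walk_step a c by simp
    then show ?thesis using walk_step.IH reachable_trans by blast
  next
    case True
    then have ie: "inc G e = {a, c}" using walk_step by simp
    from walk_step.IH show ?thesis
    proof (elim disjE exE conjE)
      assume "reachable ?D c b"
      then show ?thesis using ie reachable_refl[OF a] by blast
    next
      fix x y assume xy: "inc G e = {x, y}" "reachable ?D c x" "reachable ?D y b"
      show ?thesis
      proof (cases "y = a")
        case True
        then show ?thesis using xy by blast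
      next
        case False
        then have "y = c" using xy(1) ie by blast
        then show ?thesis using ie reachable_refl[OF a] xy(3) by blast
      qed
    qed
  qed
qed

lemma path_tl: "is_path G (x # y # vr) (g # r) \<Longrightarrow> is_path G (y # vr) r"
  unfolding is_path_def by (auto simp: nth_Cons_Suc)

lemma path_walk: "is_path G vs es \<Longrightarrow> walk G (hd vs) (last vs) (length es)"
proof (induction es arbitrary: vs)
  case Nil
  then obtain a where "vs = [a]" unfolding is_path_def by (cases vs) auto
  then show ?case using Nil by (auto simp: is_path_def intro: walk_refl)
next
  case (Cons g es)
  then obtain a c vr where vs: "vs = a # c # vr" unfolding is_path_def
    by (cases vs; cases "tl vs") auto
  have "is_path G (c # vr) es" using Cons.prems vs path_tl by blast
  moreover have "g \<in> edges G" "inc G g = {a, c}" "a \<in> verts G"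
    using Cons.prems unfolding is_path_def vs by force+
  ultimately show ?case using Cons.IH[of "c # vr"] vs by (auto intro: walk_step)
qed

lemma path_reachable: "is_path G vs es \<Longrightarrow> reachable G (hd vs) (last vs)"
  using path_walk reachable_def by blast

lemma path_take: "is_path G vs es \<Longrightarrow> k < length vs \<Longrightarrow> is_path G (take (Suc k) vs) (take k es)"
  unfolding is_path_def by (auto dest: in_set_takeD simp: min_def)

lemma path_drop: "is_path G vs es \<Longrightarrow> k < length vs \<Longrightarrow> is_path G (drop k vs) (drop k es)"
  unfolding is_path_def
  by (auto dest: in_set_dropD simp: add.commute[of k] add_Suc_right[symmetric] simp del: add_Suc_right)

lemma path_Cons:
  "is_path G vs es \<Longrightarrow> a \<in> verts G \<Longrightarrow> a \<notin> set vs \<Longrightarrow> g \<in> edges G \<Longrightarrow> inc G g = {a, hd vs} \<Longrightarrow>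
    is_path G (a # vs) (g # es)"
  unfolding is_path_def by (auto simp: nth_Cons' hd_conv_nth)

lemma path_snoc:
  "is_path G vs es \<Longrightarrow> b \<in> verts G \<Longrightarrow> b \<notin> set vs \<Longrightarrow> g \<in> edges G \<Longrightarrow> inc G g = {last vs, b} \<Longrightarrow>
    is_path G (vs @ [b]) (es @ [g])"
  unfolding is_path_def by (auto simp: nth_append last_conv_nth less_Suc_eq)

lemma path_nth_neq: "is_path G vs es \<Longrightarrow> i < length es \<Longrightarrow> vs ! i \<noteq> vs ! Suc i"
  unfolding is_path_def by (simp add: nth_eq_iff_index_eq)

lemma walk_imp_path:
  "walk G a b n \<Longrightarrow> \<exists>vs es. is_path G vs es \<and> hd vs = a \<and> last vs = b \<and> length es \<le> n"
proof (induction rule: walk.induct)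
  case (walk_refl a)
  then show ?case by (intro exI[of _ "[a]"] exI[of _ "[]"]) (auto simp: is_path_def)
next
  case (walk_step a g c b n)
  then obtain vs es where p: "is_path G vs es" "hd vs = c" "last vs = b" "length es \<le> n" by blast
  show ?case
  proof (cases "a \<in> set vs")
    case False
    then have "is_path G (a # vs) (g # es)" using path_Cons[OF p(1)] walk_step p(2) by simp
    moreover have "last (a # vs) = b" "length (g # es) \<le> Suc n"
      using p is_path_def by auto
    ultimately show ?thesis by force
  next
    case True
    then obtain k where k: "k < length vs" "vs ! k = a" by (auto simp: in_set_conv_nth)
    then show ?thesis using path_drop[OF p(1) k(1)] p
      by (intro exI[of _ "drop k vs"] exI[of _ "drop k es"]) (auto simp: hd_drop_conv_nth)
  qed
qed

lemma path_distinct_edges: "is_path G vs es \<Longrightarrow> distinct es"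
  unfolding distinct_conv_nth
proof (intro allI impI)
  fix i j assume p: "is_path G vs es" and ij: "i < length es" "j < length es" "i \<noteq> j"
  then have "inc G (es ! i) = {vs ! i, vs ! Suc i}" "inc G (es ! j) = {vs ! j, vs ! Suc j}"
    "distinct vs" "length vs = length es + 1"
    unfolding is_path_def by auto
  then show "es ! i \<noteq> es ! j" using ij by (auto simp: doubleton_eq_iff nth_eq_iff_index_eq)
qed

lemma path_del_edges_iff: "is_path (del_edges G F) vs es \<longleftrightarrow> is_path G vs es \<and> set es \<inter> F = {}"
  unfolding is_path_def by (auto simp: in_set_conv_nth disjoint_iff)

lemma path_length: "is_path G vs es \<Longrightarrow> length vs = length es + 1"
  unfolding is_path_def by simp

lemma path_walk_prefix: "is_path G vs es \<Longrightarrow> k < length vs \<Longrightarrow> walk G (hd vs) (vs ! k) k"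
proof -
  assume p: "is_path G vs es" and k: "k < length vs"
  then have "hd (take (Suc k) vs) = hd vs" "last (take (Suc k) vs) = vs ! k"
    by (cases vs, simp_all) (simp add: take_Suc_conv_app_nth)
  then show ?thesis using path_walk[OF path_take[OF p k]] k p by (simp add: is_path_def)
qed

lemma path_walk_suffix:
  "is_path G vs es \<Longrightarrow> k < length vs \<Longrightarrow> walk G (vs ! k) (last vs) (length es - k)"
proof -
  assume p: "is_path G vs es" and k: "k < length vs"
  then have "hd (drop k vs) = vs ! k" "last (drop k vs) = last vs" by (simp_all add: hd_drop_conv_nth)
  then show ?thesis using path_walk[OF path_drop[OF p k]] by simp
qed

lemma path_reachable_mem: "is_path G vs es \<Longrightarrow> x \<in> set vs \<Longrightarrow> reachable G (hd vs) x"
  unfolding reachable_def by (metis in_set_conv_nth path_walk_prefix)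

lemma path_reachable_around_edge:
  assumes p: "is_path G vs es" and i: "i < length es"
  shows "reachable (del_edges G {es ! i}) (hd vs) (vs ! i) \<and>
    reachable (del_edges G {es ! i}) (vs ! Suc i) (last vs)"
proof
  have len: "length vs = length es + 1" using p unfolding is_path_def by auto
  have d: "distinct es" using path_distinct_edges[OF p] .
  have "es ! i \<notin> set (take i es)" using d i by (simp add: in_set_conv_nth nth_eq_iff_index_eq)
  then have "is_path (del_edges G {es ! i}) (take (Suc i) vs) (take i es)"
    using path_take[OF p] i len by (simp add: path_del_edges_iff)
  from path_reachable[OF this] show "reachable (del_edges G {es ! i}) (hd vs) (vs ! i)"
    using i len p by (simp add: hd_conv_nth last_conv_nth is_path_def min_def)
  have "es ! i \<notin> set (drop (Suc i) es)" using d i by (auto simp: in_set_conv_nth nth_eq_iff_index_eq)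
  then have "is_path (del_edges G {es ! i}) (drop (Suc i) vs) (drop (Suc i) es)"
    using path_drop[OF p] i len by (simp add: path_del_edges_iff)
  from path_reachable[OF this] show "reachable (del_edges G {es ! i}) (vs ! Suc i) (last vs)"
    using i len by (simp add: hd_drop_conv_nth)
qed

lemma del_edges_del_edges: "del_edges (del_edges G F) F' = del_edges G (F \<union> F')"
proof -
  have "edges G - F - F' = edges G - (F \<union> F')" by blast
  then show ?thesis unfolding del_edges_def by simp
qed

lemma path_subgraph: "is_path G vs es \<Longrightarrow> subgraph G H \<Longrightarrow> is_path H vs es"
  unfolding is_path_def subgraph_def by auto

lemma path_eq_if_same_edges:
  "is_path G vs es \<Longrightarrow> is_path G vs' es' \<Longrightarrow> hd vs = hd vs' \<Longrightarrow> set es = set es' \<Longrightarrow>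
    vs = vs' \<and> es = es'"
proof (induction es arbitrary: vs vs' es')
  case Nil
  then have "es' = []" by simp
  then show ?case using Nil unfolding is_path_def by (cases vs; cases vs') auto
next
  case (Cons f r)
  obtain a c vr where vs: "vs = a # c # vr" using Cons.prems(1) unfolding is_path_def
    by (cases vs; cases "tl vs") auto
  obtain f' r' where es': "es' = f' # r'" using Cons.prems(4) by (cases es') auto
  obtain c' vr' where vs': "vs' = a # c' # vr'" using Cons.prems(2,3) vs es' unfolding is_path_def
    by (cases vs'; cases "tl vs'") auto
  have dv: "distinct vs" and lv: "length vs = length (f # r) + 1"
    using Cons.prems(1) unfolding is_path_def by auto
  have incf': "inc G f' = {a, c'}" using Cons.prems(2) unfolding vs' es' is_path_def by force
  obtain k where k: "k < length (f # r)" "(f # r) ! k = f'"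
    using Cons.prems(4) es' by (metis in_set_conv_nth list.set_intros(1))
  have "inc G f' = {vs ! k, vs ! Suc k}" using Cons.prems(1) k unfolding is_path_def by auto
  moreover have "vs ! 0 = a" using vs by simp
  ultimately have "vs ! 0 \<in> {vs ! k, vs ! Suc k}" using incf' by auto
  then have "k = 0" using dv lv k by (auto simp: nth_eq_iff_index_eq)
  then have ff: "f' = f" using k by simp
  have "inc G f = {a, c}" using Cons.prems(1) unfolding vs is_path_def by force
  moreover have "a \<noteq> c" "a \<noteq> c'" using dv vs Cons.prems(2) vs' unfolding is_path_def by auto
  ultimately have cc: "c' = c" using incf' ff by (auto simp: doubleton_eq_iff)
  have "set r = set r'"
    using Cons.prems(4) es' ff path_distinct_edges[OF Cons.prems(1)] path_distinct_edges[OF Cons.prems(2)]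
    by (metis Diff_insert_absorb distinct.simps(2) list.simps(15))
  moreover have "is_path G (c # vr) r" "is_path G (c # vr') r'"
    using Cons.prems(1,2) vs vs' es' cc path_tl by blast+
  ultimately have "c # vr = c # vr' \<and> r = r'" using Cons.IH[of "c # vr" "c # vr'" r'] by simp
  then show ?case using vs vs' es' ff cc by simp
qed

text \<open>Every path with the same ends has to use all the bridges.\<close>
lemma usp_if_bridges:
  assumes p: "is_path G vs es"
    and bridges: "\<forall>i<length es. \<not> reachable (del_edges G {es ! i}) (vs ! i) (vs ! Suc i)"
  shows "is_usp G vs es"
proof -
  have sub: "set es \<subseteq> set es'"
    if p': "is_path G vs' es'" "hd vs' = hd vs" "last vs' = last vs" for vs' es'
  proof
    fix f assume "f \<in> set es"
    then obtain i where i: "i < length es" "es ! i = f" by (auto simp: in_set_conv_nth)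
    show "f \<in> set es'"
    proof (rule ccontr)
      assume "f \<notin> set es'"
      then have "reachable (del_edges G {f}) (hd vs) (last vs)"
        using path_reachable[of "del_edges G {f}" vs' es'] p' by (simp add: path_del_edges_iff)
      then have "reachable (del_edges G {f}) (vs ! i) (vs ! Suc i)"
        using path_reachable_around_edge[OF p i(1)] i(2) reachable_sym reachable_trans by metis
      then show False using bridges i by auto
    qed
  qed
  have len: "length es \<le> length es'" and eq: "length es' = length es \<Longrightarrow> set es = set es'"
    if "is_path G vs' es'" "hd vs' = hd vs" "last vs' = last vs" for vs' es'
    using sub[OF that] path_distinct_edges[OF p] path_distinct_edges[OF that(1)]
    by (auto simp: distinct_card[symmetric] card_mono card_subset_eq)
  show ?thesis unfolding is_usp_def
  proof (intro conjI allI impI)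
    show "is_path G vs es" by (rule p)
  next
    fix vs' es' assume "is_path G vs' es' \<and> hd vs' = hd vs \<and> last vs' = last vs"
    then show "length vs \<le> length vs'" using len[of vs' es'] p unfolding is_path_def by auto
  next
    fix vs' es' assume a: "is_path G vs' es' \<and> hd vs' = hd vs \<and> last vs' = last vs \<and>
      length vs' = length vs"
    then have "length es' = length es" using p unfolding is_path_def by auto
    then show "vs' = vs" "es' = es" using path_eq_if_same_edges[OF p, of vs' es'] eq a by auto
  qed
qed

lemma acyclic_edge_is_bridge:
  assumes acyclic: "\<not> (\<exists>vs es. is_cycle G vs es)"
    and g: "g \<in> edges G" "inc G g = {x, y}" "x \<noteq> y"
  shows "\<not> reachable (del_edges G {g}) x y"
proof
  assume "reachable (del_edges G {g}) x y"
  then obtain vs es where p: "is_path G vs es" "g \<notin> set es" "hd vs = x" "last vs = y"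
    unfolding reachable_def by (auto dest!: walk_imp_path simp: path_del_edges_iff)
  have len: "length vs = length es + 1" "distinct vs" "set vs \<subseteq> verts G" "vs \<noteq> []"
    using p unfolding is_path_def by auto
  have "length vs \<ge> 2"
  proof (rule ccontr)
    assume "\<not> 2 \<le> length vs"
    then have "length vs = 1" using len by linarith
    then have "hd vs = last vs" by (cases vs) auto
    then show False using p g by simp
  qed
  have "(es @ [g]) ! i \<in> edges G \<and> inc G ((es @ [g]) ! i) = {vs ! i, vs ! (Suc i mod length vs)}"
    if i: "i < length (es @ [g])" for i
  proof (cases "i < length es")
    case True
    then show ?thesis using p(1) len unfolding is_path_def by (auto simp: nth_append)
  next
    case False
    then have "i = length es" using i by simp
    moreover have "vs ! length es = y" "vs ! 0 = x" using p(3,4) len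
      by (auto simp: last_conv_nth hd_conv_nth)
    ultimately show ?thesis using g len by (auto simp: nth_append insert_commute)
  qed
  then have "is_cycle G vs (es @ [g])"
    unfolding is_cycle_def using len \<open>length vs \<ge> 2\<close> path_distinct_edges[OF p(1)] p(2) by auto
  then show False using acyclic by blast
qed

lemma acyclic_path_is_usp:
  assumes "\<not> (\<exists>vs es. is_cycle G vs es)" and p: "is_path G vs es"
  shows "is_usp G vs es"
proof (rule usp_if_bridges[OF p], intro allI impI)
  fix i assume i: "i < length es"
  then have "es ! i \<in> edges G" "inc G (es ! i) = {vs ! i, vs ! Suc i}"
    using p unfolding is_path_def by auto
  then show "\<not> reachable (del_edges G {es ! i}) (vs ! i) (vs ! Suc i)"
    using acyclic_edge_is_bridge[OF assms(1)] path_nth_neq[OF p i] by blast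
qed

lemma dist_le_path: "is_path G vs es \<Longrightarrow> dist G (hd vs) (last vs) \<le> length es"
  unfolding dist_def by (rule Least_le) blast

lemma dist_le_walk: "walk G a b n \<Longrightarrow> dist G a b \<le> n"
  using walk_imp_path dist_le_path by fastforce

lemma dist_attained:
  assumes "reachable G a b"
  shows "\<exists>vs es. is_path G vs es \<and> hd vs = a \<and> last vs = b \<and> length es = dist G a b"
proof -
  have "\<exists>n vs es. is_path G vs es \<and> hd vs = a \<and> last vs = b \<and> length es = n"
    using assms walk_imp_path unfolding reachable_def by blast
  from LeastI_ex[OF this] show ?thesis unfolding dist_def .
qed

lemma walk_dist: "reachable G a b \<Longrightarrow> walk G a b (dist G a b)"
  using dist_attained path_walk by metis

lemma dist_subgraph_le: "subgraph G H \<Longrightarrow> reachable G a b \<Longrightarrow> dist H a b \<le> dist G a b"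
  using walk_dist walk_subgraph dist_le_walk by metis

lemma connected_graph_iff_reachable:
  "connected_graph G \<longleftrightarrow> (\<forall>a\<in>verts G. \<forall>b\<in>verts G. reachable G a b)"
  unfolding connected_graph_def reachable_def using walk_imp_path path_walk by metis

lemma diameter_eq_Max: "diameter G = Max ((\<lambda>(a, b). dist G a b) ` (verts G \<times> verts G))"
  unfolding diameter_def by (rule arg_cong[where f = Max]) auto

lemma dist_le_diameter:
  "finite (verts G) \<Longrightarrow> a \<in> verts G \<Longrightarrow> b \<in> verts G \<Longrightarrow> dist G a b \<le> diameter G"
  unfolding diameter_eq_Max by (rule Max_ge) auto

lemma diameter_attained:
  assumes "finite (verts G)" "verts G \<noteq> {}"
  obtains a b where "a \<in> verts G" "b \<in> verts G" "diameter G = dist G a b"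
proof -
  have "diameter G \<in> (\<lambda>(a, b). dist G a b) ` (verts G \<times> verts G)"
    unfolding diameter_eq_Max using assms by (intro Max_in) auto
  then show ?thesis using that by auto
qed

lemma diametric_path_exists:
  assumes "wf_graph G" "connected_graph G"
  obtains vs es where "diametric_path G vs es"
proof -
  obtain a b where "a \<in> verts G" "b \<in> verts G" "diameter G = dist G a b"
    using diameter_attained assms(1) unfolding wf_graph_def by metis
  then show ?thesis using that dist_attained assms(2) unfolding connected_graph_iff_reachable
    diametric_path_def by metis
qed

lemma path_length_le_card: "is_path G vs es \<Longrightarrow> finite (verts G) \<Longrightarrow> length vs \<le> card (verts G)"
  unfolding is_path_def by (metis card_mono distinct_card)

lemma usp_single: "v \<in> verts G \<Longrightarrow> is_usp G [v] []"
  unfolding is_usp_def is_path_def by (auto simp: length_Suc_conv)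

lemma usp_set_finite: "finite (verts G) \<Longrightarrow> finite {length vs | vs es. is_usp G vs es}"
  by (rule finite_subset[of _ "{..card (verts G)}"]) (auto simp: is_usp_def path_length_le_card)

lemma usp_ge: "finite (verts G) \<Longrightarrow> is_usp G vs es \<Longrightarrow> length vs \<le> usp G"
  unfolding usp_def by (rule Max_ge[OF usp_set_finite]) blast+

lemma usp_attained:
  assumes "wf_graph G"
  obtains vs es where "is_usp G vs es" "length vs = usp G"
proof -
  obtain v where "v \<in> verts G" using assms unfolding wf_graph_def by auto
  then have "usp G \<in> {length vs | vs es. is_usp G vs es}"
    unfolding usp_def using assms usp_single usp_set_finite unfolding wf_graph_def
    by (intro Max_in) blast+
  then show ?thesis using that by force
qed

lemma usp_le_card: "wf_graph G \<Longrightarrow> usp G \<le> card (verts G)"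
  using usp_attained path_length_le_card unfolding is_usp_def wf_graph_def by metis

lemma sp_add_usp_le:
  "wf_graph G \<Longrightarrow> is_usp G vs es \<Longrightarrow> sp G + length vs \<le> card (verts G)"
  using usp_ge[of G vs es] usp_le_card[of G] unfolding sp_def wf_graph_def by linarith

section \<open>Contracting an edge\<close>

definition merge :: "nat \<Rightarrow> nat \<Rightarrow> nat \<Rightarrow> nat" where
  "merge u w x = (if x = w then u else x)"

definition contract :: "mgraph \<Rightarrow> nat \<Rightarrow> nat \<Rightarrow> nat \<Rightarrow> mgraph" where
  "contract H u w e =
    \<lparr>verts = verts H - {w}, edges = edges H - {e}, inc = (\<lambda>f. merge u w ` inc H f)\<rparr>"

lemma contract_simps [simp]:
  "verts (contract H u w e) = verts H - {w}" "edges (contract H u w e) = edges H - {e}"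
  "inc (contract H u w e) f = merge u w ` inc H f"
  unfolding contract_def by simp_all

lemma merge_simps [simp]: "merge u w w = u" "x \<noteq> w \<Longrightarrow> merge u w x = x"
  unfolding merge_def by simp_all

lemma merge_eq: "merge u w x = merge u w y \<Longrightarrow> x \<noteq> y \<Longrightarrow> u \<noteq> w \<Longrightarrow> {x, y} = {u, w}"
  unfolding merge_def by (auto split: if_splits)

lemma del_edges_contract: "del_edges (contract H u w e) F = contract (del_edges H F) u w e"
proof -
  have "edges H - {e} - F = edges H - F - {e}" by blast
  then show ?thesis unfolding del_edges_def contract_def by simp
qed

lemma wf_graph_incE:
  assumes "wf_graph G" "g \<in> edges G"
  obtains x y where "inc G g = {x, y}" "x \<noteq> y" "x \<in> verts G" "y \<in> verts G"
  using assms unfolding wf_graph_def by (metis card_2_iff insert_subset)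

lemma wf_graph_del_edges: "wf_graph G \<Longrightarrow> wf_graph (del_edges G F)"
  unfolding wf_graph_def by auto

lemma minor_step_del_edge: "e \<in> edges H \<Longrightarrow> minor_step H (del_edges H {e})"
  unfolding minor_step_def del_edges_def by blast

lemma minor_step_contract:
  assumes "e \<in> edges H" "inc H e = {u, w}" "u \<noteq> w"
    and "\<forall>f\<in>edges H. f \<noteq> e \<longrightarrow> inc H f \<noteq> inc H e"
  shows "minor_step H (contract H u w e)"
  unfolding minor_step_def contract_def merge_def using assms by blast

locale edge_contraction =
  fixes H u w e
  assumes wf: "wf_graph H" and e: "e \<in> edges H" and inc_e: "inc H e = {u, w}" and uw: "u \<noteq> w"
begin

abbreviation "K \<equiv> contract H u w e"

lemma u_in: "u \<in> verts H" and w_in: "w \<in> verts H"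
  using wf e inc_e unfolding wf_graph_def by auto

lemma merge_u: "merge u w u = u"
  using uw by simp

lemma merge_in: "x \<in> verts H \<Longrightarrow> merge u w x \<in> verts K"
  using u_in uw unfolding merge_def by auto

lemma card_verts_contract: "card (verts K) + 1 = card (verts H)"
  using w_in wf unfolding wf_graph_def by (simp add: card_Diff_singleton card_gt_0_iff)

lemma walk_u_w: "walk H u w 1" "walk H w u 1"
  using walk_edge[OF e inc_e u_in w_in] walk_edge[OF e _ w_in u_in] inc_e by (auto simp: insert_commute)

lemma walk_if_merge_eq:
  assumes "c \<in> verts H" "d \<in> verts H" "merge u w c = merge u w d"
  shows "\<exists>k \<le> (if merge u w c = u then 1 else 0). walk H c d k"
proof (cases "c = d")
  case True
  then show ?thesis using assms(1) walk_refl by blast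
next
  case False
  then have cd: "{c, d} = {u, w}" using merge_eq assms(3) uw by blast
  then have "merge u w c = u" using uw unfolding merge_def by auto
  moreover have "walk H c d 1" using cd walk_u_w False by (auto simp: doubleton_eq_iff)
  ultimately show ?thesis by auto
qed

lemma reachable_if_merge_eq:
  "c \<in> verts H \<Longrightarrow> d \<in> verts H \<Longrightarrow> merge u w c = merge u w d \<Longrightarrow> reachable H c d"
  unfolding reachable_def using walk_if_merge_eq by blast

lemma walk_contract: "walk H a b n \<Longrightarrow> \<exists>m\<le>n. walk K (merge u w a) (merge u w b) m"
proof (induction rule: walk.induct)
  case (walk_refl a)
  then show ?case using merge_in by (auto intro!: walk.walk_refl)
next
  case (walk_step a g c b n)
  then obtain m where m: "m \<le> n" "walk K (merge u w c) (merge u w b) m" by blast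
  show ?case
  proof (cases "g = e")
    case True
    then have "{a, c} = {u, w}" using walk_step inc_e by simp
    then have "merge u w a = merge u w c" unfolding merge_def using uw by (auto simp: doubleton_eq_iff)
    then show ?thesis using m by (intro exI[of _ m]) auto
  next
    case False
    then have "walk K (merge u w a) (merge u w b) (Suc m)"
      using walk_step merge_in m(2) by (auto intro: walk.walk_step)
    then show ?thesis using m by auto
  qed
qed

lemma reachable_contract: "reachable H a b \<Longrightarrow> reachable K (merge u w a) (merge u w b)"
  unfolding reachable_def using walk_contract by blast

lemma walk_lift_path:
  "is_path K vs es \<Longrightarrow> c \<in> verts H \<Longrightarrow> d \<in> verts H \<Longrightarrow>
    merge u w c = hd vs \<Longrightarrow> merge u w d = last vs \<Longrightarrow>
    \<exists>n \<le> length es + (if u \<in> set vs then 1 else 0). walk H c d n"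
proof (induction es arbitrary: vs c)
  case Nil
  then obtain x where "vs = [x]" unfolding is_path_def by (cases vs) auto
  then show ?case using walk_if_merge_eq[of c d] Nil by auto
next
  case (Cons g r)
  obtain x y vr where vs: "vs = x # y # vr" using Cons.prems(1) unfolding is_path_def
    by (cases vs; cases "tl vs") auto
  have tl: "is_path K (y # vr) r" using Cons.prems(1) vs path_tl by blast
  have "\<forall>i<length (g # r). (g # r) ! i \<in> edges K \<and> inc K ((g # r) ! i) = {vs ! i, vs ! Suc i}"
    using Cons.prems(1) unfolding is_path_def by blast
  from this[rule_format, of 0]
  have g: "g \<in> edges H" "g \<noteq> e" and inc_g: "merge u w ` inc H g = {x, y}" using vs by simp_all
  obtain p q where pq: "inc H g = {p, q}" "p \<in> verts H" "q \<in> verts H"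
    using wf_graph_incE[OF wf g(1)] by metis
  then have "(merge u w p = x \<and> merge u w q = y) \<or> (merge u w p = y \<and> merge u w q = x)"
    using inc_g by (simp add: doubleton_eq_iff)
  then obtain x' y' where xy': "inc H g = {x', y'}" "merge u w x' = x" "merge u w y' = y"
    "x' \<in> verts H" "y' \<in> verts H"
  proof (elim disjE conjE)
    assume "merge u w p = x" "merge u w q = y"
    then show thesis using that pq by blast
  next
    assume "merge u w p = y" "merge u w q = x"
    then show thesis using that[of q p] pq by (simp add: insert_commute)
  qed
  obtain k where k: "k \<le> (if x = u then 1 else 0)" "walk H c x' k"
    using walk_if_merge_eq[of c x'] Cons.prems(2,4) xy'(2,4) vs by auto
  obtain n where n: "n \<le> length r + (if u \<in> set (y # vr) then 1 else 0)" "walk H y' d n"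
    using Cons.IH[OF tl xy'(5) Cons.prems(3)] xy'(3) Cons.prems(5) vs by auto
  have "walk H c d (k + (1 + n))"
    using k(2) walk_edge[OF g(1) xy'(1,4,5)] n(2) walk_append by blast
  moreover have "x \<notin> set (y # vr)" using Cons.prems(1) vs unfolding is_path_def by auto
  then have "k + (1 + n) \<le> length (g # r) + (if u \<in> set vs then 1 else 0)"
    using k(1) n(1) vs by (auto split: if_splits)
  ultimately show ?case by blast
qed

lemma reachable_lift:
  "reachable K (merge u w c) (merge u w d) \<Longrightarrow> c \<in> verts H \<Longrightarrow> d \<in> verts H \<Longrightarrow> reachable H c d"
  unfolding reachable_def using walk_imp_path walk_lift_path by metis

lemma dist_le_dist_contract:
  assumes "reachable H a b"
  shows "dist H a b \<le> dist K (merge u w a) (merge u w b) + (if reachable H a u then 1 else 0)"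
proof -
  have a: "a \<in> verts H" and b: "b \<in> verts H" using reachable_verts[OF assms] by auto
  obtain vs es where p: "is_path K vs es" "hd vs = merge u w a" "last vs = merge u w b"
    "length es = dist K (merge u w a) (merge u w b)"
    using dist_attained[OF reachable_contract[OF assms]] by blast
  obtain n where n: "n \<le> length es + (if u \<in> set vs then 1 else 0)" "walk H a b n"
    using walk_lift_path[OF p(1) a b p(2)[symmetric] p(3)[symmetric]] by blast
  have "u \<in> set vs \<Longrightarrow> reachable H a u"
    using path_reachable_mem[OF p(1)] p(2) reachable_lift[OF _ a u_in] merge_u by metis
  then show ?thesis using dist_le_walk[OF n(2)] n(1) p(4) by (auto split: if_splits)
qed

lemma dist_contract_path_through_edge:
  assumes p: "is_path H vs es" and "e \<in> set es"
  shows "dist K (merge u w (hd vs)) (merge u w (last vs)) + 1 \<le> length es"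
proof -
  obtain i where i: "i < length es" "es ! i = e" using assms(2) by (metis in_set_conv_nth)
  have len: "length vs = length es + 1" using p unfolding is_path_def by simp
  have w1: "walk H (hd vs) (vs ! i) i" and w2: "walk H (vs ! Suc i) (last vs) (length es - Suc i)"
    using path_walk_prefix[OF p] path_walk_suffix[OF p] i len by auto
  obtain m1 m2 where m1: "m1 \<le> i" "walk K (merge u w (hd vs)) (merge u w (vs ! i)) m1"
    and m2: "m2 \<le> length es - Suc i" "walk K (merge u w (vs ! Suc i)) (merge u w (last vs)) m2"
    using walk_contract[OF w1] walk_contract[OF w2] by blast
  have "inc H e = {vs ! i, vs ! Suc i}" using p i unfolding is_path_def by auto
  then have "merge u w (vs ! i) = merge u w (vs ! Suc i)"
    using inc_e uw unfolding merge_def by (auto simp: doubleton_eq_iff)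
  then have "walk K (merge u w (hd vs)) (merge u w (last vs)) (m1 + m2)"
    using walk_append m1(2) m2(2) by simp
  then show ?thesis using dist_le_walk m1 m2 i by fastforce
qed

lemma connected_contract: "connected_graph H \<Longrightarrow> connected_graph K"
  unfolding connected_graph_iff_reachable using reachable_contract by fastforce

lemma wf_graph_contract:
  assumes simple: "\<forall>f\<in>edges H. f \<noteq> e \<longrightarrow> inc H f \<noteq> inc H e"
  shows "wf_graph K"
  unfolding wf_graph_def
proof (intro conjI ballI)
  show "finite (verts K)" "verts K \<noteq> {}" "finite (edges K)"
    using wf merge_in[OF u_in] unfolding wf_graph_def by auto
next
  fix f assume "f \<in> edges K"
  then have f: "f \<in> edges H" "f \<noteq> e" by simp_all
  obtain x y where xy: "inc H f = {x, y}" "x \<noteq> y" "x \<in> verts H" "y \<in> verts H"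
    using wf_graph_incE[OF wf f(1)] by metis
  have "merge u w x \<noteq> merge u w y"
  proof
    assume "merge u w x = merge u w y"
    then have "inc H f = inc H e" using merge_eq xy uw inc_e by simp
    then show False using simple f by blast
  qed
  then show "inc K f \<subseteq> verts K" "card (inc K f) = 2" using xy merge_in by auto
qed

lemma diameter_contract_lt:
  assumes c: "connected_graph H" and common: "\<forall>vs es. diametric_path H vs es \<longrightarrow> e \<in> set es"
  shows "diameter K + 1 \<le> diameter H"
proof -
  have fin: "finite (verts H)" using wf unfolding wf_graph_def by blast
  obtain x y where xy: "x \<in> verts K" "y \<in> verts K" "diameter K = dist K x y"
    using diameter_attained[of K] fin merge_in[OF u_in] by auto
  then have xy_H: "x \<in> verts H" "y \<in> verts H" "merge u w x = x" "merge u w y = y" by auto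
  obtain vs es where p: "is_path H vs es" "hd vs = x" "last vs = y" "length es = dist H x y"
    using dist_attained c xy_H unfolding connected_graph_iff_reachable by blast
  have "dist H x y \<le> diameter H" using dist_le_diameter[OF fin xy_H(1,2)] .
  show ?thesis
  proof (cases "e \<in> set es")
    case True
    then show ?thesis using dist_contract_path_through_edge[OF p(1)] p xy xy_H \<open>dist H x y \<le> diameter H\<close>
      by fastforce
  next
    case False
    then have "dist H x y \<noteq> diameter H" using common p unfolding diametric_path_def by metis
    moreover obtain m where "m \<le> length es" "walk K x y m"
      using walk_contract[OF path_walk[OF p(1)]] p xy_H by auto
    ultimately show ?thesis
      using dist_le_walk xy(3) p(4) \<open>dist H x y \<le> diameter H\<close> by fastforce
  qed
qed

end

lemma edge_contraction_del_edges:
  "edge_contraction H u w e \<Longrightarrow> e \<notin> F \<Longrightarrow> edge_contraction (del_edges H F) u w e"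
  unfolding edge_contraction_def using wf_graph_del_edges by auto

lemma (in edge_contraction) usp_contract_path:
  assumes acyclic: "\<not> (\<exists>vs es. is_cycle H vs es)" and p: "is_path H vs es" and avoid: "e \<notin> set es"
  shows "is_usp K (map (merge u w) vs) es"
proof -
  let ?vs = "map (merge u w) vs"
  have pD: "is_path (del_edges H {e}) vs es" using p avoid by (auto simp: path_del_edges_iff)
  have not_both: "\<not> (u \<in> set vs \<and> w \<in> set vs)"
  proof
    assume "u \<in> set vs \<and> w \<in> set vs"
    then have "reachable (del_edges H {e}) (hd vs) u" "reachable (del_edges H {e}) (hd vs) w"
      using path_reachable_mem[OF pD] by blast+
    then have "reachable (del_edges H {e}) u w" using reachable_sym reachable_trans by blast
    then show False using acyclic_edge_is_bridge[OF acyclic e inc_e uw] by blast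
  qed
  have "inj_on (merge u w) (set vs)"
  proof (rule inj_onI, rule ccontr)
    fix x y assume "x \<in> set vs" "y \<in> set vs" "merge u w x = merge u w y" "x \<noteq> y"
    then show False using merge_eq[of u w x y] uw not_both by (auto simp: doubleton_eq_iff)
  qed
  moreover have es: "es ! i \<in> edges H" "es ! i \<noteq> e" "inc H (es ! i) = {vs ! i, vs ! Suc i}"
    if "i < length es" for i
    using p avoid that unfolding is_path_def by (auto simp: in_set_conv_nth)
  ultimately have pK: "is_path K ?vs es"
    using p merge_in unfolding is_path_def by (auto simp: distinct_map)
  show ?thesis
  proof (rule usp_if_bridges[OF pK], intro allI impI notI)
    fix i assume i: "i < length es" and "reachable (del_edges K {es ! i}) (?vs ! i) (?vs ! Suc i)"
    interpret D: edge_contraction "del_edges H {es ! i}" u w e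
      using edge_contraction_del_edges[OF edge_contraction_axioms] es(2)[OF i] by simp
    have "reachable D.K (merge u w (vs ! i)) (merge u w (vs ! Suc i))"
      using \<open>reachable (del_edges K {es ! i}) (?vs ! i) (?vs ! Suc i)\<close> i path_length[OF p]
      by (simp add: del_edges_contract)
    then have "reachable (del_edges H {es ! i}) (vs ! i) (vs ! Suc i)"
      using D.reachable_lift p i unfolding is_path_def by (simp add: subset_iff)
    then show False
      using acyclic_edge_is_bridge[OF acyclic es(1,3)[OF i]] path_nth_neq[OF p i] by blast
  qed
qed

section \<open>Minors\<close>

lemma wf_graph_minor_step:
  assumes wf: "wf_graph H" and "minor_step H G"
  shows "wf_graph G"
  using assms(2) unfolding minor_step_def
proof (elim disjE exE bexE conjE)
  fix v assume "G = H\<lparr>verts := verts H - {v}\<rparr>" "verts H \<noteq> {v}" "\<forall>e\<in>edges H. v \<notin> inc H e"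
  then show ?thesis using wf unfolding wf_graph_def by auto
next
  fix e assume "G = H\<lparr>edges := edges H - {e}\<rparr>"
  then show ?thesis using wf unfolding wf_graph_def by auto
next
  fix e u w assume e: "e \<in> edges H" "inc H e = {u, w}" "u \<noteq> w"
    and simple: "\<forall>f\<in>edges H. f \<noteq> e \<longrightarrow> inc H f \<noteq> inc H e"
    and G: "G = \<lparr>verts = verts H - {w}, edges = edges H - {e},
      inc = \<lambda>f. (\<lambda>x. if x = w then u else x) ` inc H f\<rparr>"
  interpret edge_contraction H u w e using wf e by unfold_locales
  have "G = K" unfolding G contract_def merge_def by simp
  then show ?thesis using wf_graph_contract[OF simple] by simp
qed

lemma graph_iso_refl: "graph_iso G G"
  unfolding graph_iso_def by (auto intro!: exI[of _ id] bij_betw_id)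

lemma is_minor_refl: "is_minor G G"
  unfolding is_minor_def using graph_iso_refl by blast

lemma is_proper_minor_minor_step: "minor_step H G \<Longrightarrow> is_proper_minor G H"
  unfolding is_proper_minor_def using graph_iso_refl by blast

lemma is_minor_minor_step: "minor_step H G \<Longrightarrow> is_minor G H"
  unfolding is_minor_def using graph_iso_refl by (blast intro: r_into_rtranclp)

text \<open>An \<open>mgraph\<close> record keeps the incidences of deleted edges, so equal graphs may be
  different records.\<close>
definition same_graph :: "mgraph \<Rightarrow> mgraph \<Rightarrow> bool" where
  "same_graph A B \<longleftrightarrow> subgraph A B \<and> subgraph B A"

lemma same_graph_iff:
  "same_graph A B \<longleftrightarrow> verts A = verts B \<and> edges A = edges B \<and> (\<forall>f\<in>edges A. inc A f = inc B f)"
  unfolding same_graph_def subgraph_def by auto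

lemma same_graph_minor_step:
  assumes same: "same_graph A B" and "minor_step A A'"
  shows "\<exists>B'. minor_step B B' \<and> same_graph A' B'"
  using assms(2)[unfolded minor_step_def]
proof (elim disjE exE bexE conjE)
  fix v assume "v \<in> verts A" "\<forall>e\<in>edges A. v \<notin> inc A e" "verts A \<noteq> {v}"
    and A': "A' = A\<lparr>verts := verts A - {v}\<rparr>"
  then have "minor_step B (B\<lparr>verts := verts B - {v}\<rparr>)"
    using same unfolding minor_step_def same_graph_iff by auto
  moreover have "same_graph A' (B\<lparr>verts := verts B - {v}\<rparr>)" using same unfolding A' same_graph_iff by auto
  ultimately show ?thesis by blast
next
  fix e assume "e \<in> edges A" and A': "A' = A\<lparr>edges := edges A - {e}\<rparr>"
  then have "minor_step B (B\<lparr>edges := edges B - {e}\<rparr>)"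
    using same unfolding minor_step_def same_graph_iff by auto
  moreover have "same_graph A' (B\<lparr>edges := edges B - {e}\<rparr>)" using same unfolding A' same_graph_iff by auto
  ultimately show ?thesis by blast
next
  fix e u w assume e: "e \<in> edges A" "inc A e = {u, w}" "u \<noteq> w"
    and simple: "\<forall>f\<in>edges A. f \<noteq> e \<longrightarrow> inc A f \<noteq> inc A e"
    and A': "A' = \<lparr>verts = verts A - {w}, edges = edges A - {e},
      inc = \<lambda>f. (\<lambda>x. if x = w then u else x) ` inc A f\<rparr>"
  let ?B' = "\<lparr>verts = verts B - {w}, edges = edges B - {e},
      inc = \<lambda>f. (\<lambda>x. if x = w then u else x) ` inc B f\<rparr>"
  have "minor_step B ?B'" unfolding minor_step_def
    by (intro disjI2 bexI[of _ e] exI[of _ u] exI[of _ w]) (use e simple same in \<open>auto simp: same_graph_iff\<close>)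
  moreover have "same_graph A' ?B'" using same unfolding A' same_graph_iff by auto
  ultimately show ?thesis by blast
qed

lemma same_graph_minor_steps:
  "minor_step\<^sup>*\<^sup>* A A' \<Longrightarrow> same_graph A B \<Longrightarrow> \<exists>B'. minor_step\<^sup>*\<^sup>* B B' \<and> same_graph A' B'"
proof (induction rule: rtranclp_induct)
  case base
  then show ?case by blast
next
  case (step A1 A2)
  then obtain B1 where "minor_step\<^sup>*\<^sup>* B B1" "same_graph A1 B1" by blast
  moreover obtain B2 where "minor_step B1 B2" "same_graph A2 B2"
    using same_graph_minor_step[OF \<open>same_graph A1 B1\<close> step(2)] by blast
  ultimately show ?case by (meson rtranclp.rtrancl_into_rtrancl)
qed

lemma graph_iso_same_graph: "graph_iso X A \<Longrightarrow> same_graph A B \<Longrightarrow> graph_iso X B"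
  unfolding graph_iso_def same_graph_iff by (metis bij_betw_apply)

lemma walk_graph_iso:
  assumes f: "bij_betw f (verts G) (verts G')" and g: "bij_betw g (edges G) (edges G')"
    and i: "\<forall>e\<in>edges G. inc G' (g e) = f ` inc G e"
  shows "walk G a b n \<Longrightarrow> walk G' (f a) (f b) n"
proof (induction rule: walk.induct)
  case (walk_refl a)
  then show ?case using f by (auto intro!: walk.walk_refl dest: bij_betw_apply)
next
  case (walk_step a h c b n)
  then have "inc G' (g h) = {f a, f c}" "g h \<in> edges G'" "f a \<in> verts G'"
    using i f g by (auto dest: bij_betw_apply)
  then show ?case using walk_step by (auto intro: walk.walk_step)
qed

section \<open>The lower bound\<close>

definition witness :: "mgraph \<Rightarrow> (nat \<times> nat) set \<Rightarrow> bool" where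
  "witness G W \<longleftrightarrow> finite W \<and> (\<forall>p\<in>W. reachable G (fst p) (snd p)) \<and>
     (\<forall>p\<in>W. \<forall>q\<in>W. p \<noteq> q \<longrightarrow> \<not> reachable G (fst p) (fst q))"

definition witness_value :: "mgraph \<Rightarrow> (nat \<times> nat) set \<Rightarrow> nat" where
  "witness_value G W = (\<Sum>p\<in>W. dist G (fst p) (snd p) + 1)"

lemma witness_eq: "witness G W \<Longrightarrow> p \<in> W \<Longrightarrow> q \<in> W \<Longrightarrow> reachable G (fst p) (fst q) \<Longrightarrow> p = q"
  unfolding witness_def by blast

lemma witness_reachable: "witness G W \<Longrightarrow> p \<in> W \<Longrightarrow> reachable G (fst p) (snd p)"
  unfolding witness_def by blast

lemma witness_subgraph:
  "witness H W \<Longrightarrow> subgraph G H \<Longrightarrow> \<forall>p\<in>W. reachable G (fst p) (snd p) \<Longrightarrow> witness G W"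
  unfolding witness_def using reachable_subgraph by blast

lemma witness_value_subgraph_le:
  "subgraph G H \<Longrightarrow> \<forall>p\<in>W. reachable G (fst p) (snd p) \<Longrightarrow> witness_value H W \<le> witness_value G W"
  unfolding witness_value_def by (intro sum_mono) (simp add: dist_subgraph_le)

lemma witness_subset: "witness G W \<Longrightarrow> W' \<subseteq> W \<Longrightarrow> witness G W'"
  unfolding witness_def by (meson finite_subset subsetD)

lemma witness_value_Un:
  "finite A \<Longrightarrow> finite B \<Longrightarrow> A \<inter> B = {} \<Longrightarrow> witness_value G (A \<union> B) = witness_value G A + witness_value G B"
  unfolding witness_value_def by (rule sum.union_disjoint)

lemma witness_insert:
  assumes "witness G W" "reachable G a b" "\<forall>q\<in>W. \<not> reachable G a (fst q)"
  shows "witness G (insert (a, b) W)" "(a, b) \<notin> W"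
proof -
  show "(a, b) \<notin> W" using assms(2,3) reachable_verts reachable_refl by fastforce
  show "witness G (insert (a, b) W)"
    using assms reachable_sym unfolding witness_def by auto
qed

lemma witness_value_insert:
  "finite W \<Longrightarrow> p \<notin> W \<Longrightarrow> witness_value G (insert p W) = dist G (fst p) (snd p) + 1 + witness_value G W"
  unfolding witness_value_def by simp

lemma witness_value_remove:
  "finite W \<Longrightarrow> p \<in> W \<Longrightarrow> witness_value G W = dist G (fst p) (snd p) + 1 + witness_value G (W - {p})"
  unfolding witness_value_def by (simp add: sum.remove)

lemma witness_usp:
  assumes "wf_graph H"
  obtains W where "witness H W" "witness_value H W = usp H"
proof -
  obtain vs es where u: "is_usp H vs es" "length vs = usp H" using usp_attained[OF assms] by blast
  then have p: "is_path H vs es" unfolding is_usp_def by simp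
  obtain vs' es' where p': "is_path H vs' es'" "hd vs' = hd vs" "last vs' = last vs"
    "length es' = dist H (hd vs) (last vs)"
    using dist_attained[OF path_reachable[OF p]] by blast
  then have "length vs \<le> length vs'" using u(1) unfolding is_usp_def by blast
  then have "length es \<le> dist H (hd vs) (last vs)" using p p'(1,4) by (simp add: path_length)
  then have "dist H (hd vs) (last vs) = length es" using dist_le_path[OF p] by simp
  then have "witness_value H {(hd vs, last vs)} = usp H"
    using u p unfolding witness_value_def by (simp add: path_length)
  moreover have "witness H {(hd vs, last vs)}" unfolding witness_def using path_reachable[OF p] by simp
  ultimately show ?thesis using that by blast
qed

lemma witness_card_reaching_le_1: "witness G W \<Longrightarrow> card (W \<inter> {p. reachable G (fst p) v}) \<le> 1"
proof -
  assume W: "witness G W"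
  have "p = q" if "p \<in> W" "q \<in> W" "reachable G (fst p) v" "reachable G (fst q) v" for p q
    using witness_eq[OF W that(1,2)] reachable_trans[OF that(3) reachable_sym[OF that(4)]] .
  then show ?thesis using W unfolding witness_def by (simp add: card_le_Suc0_iff_eq)
qed

lemma walk_from_isolated:
  "walk H v b n \<Longrightarrow> \<forall>e\<in>edges H. v \<notin> inc H e \<Longrightarrow> b = v \<and> n = 0"
  by (induction rule: walk.induct) auto

lemma walk_avoid_isolated:
  "walk H a b n \<Longrightarrow> \<forall>e\<in>edges H. v \<notin> inc H e \<Longrightarrow> a \<noteq> v \<Longrightarrow> walk (H\<lparr>verts := verts H - {v}\<rparr>) a b n"
proof (induction rule: walk.induct)
  case (walk_refl a)
  then show ?case by (auto intro: walk.walk_refl)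
next
  case (walk_step a g c b n)
  then have "c \<noteq> v" by auto
  with walk_step show ?case by (intro walk.walk_step[of _ _ g c]) auto
qed

lemma witness_del_vertex:
  assumes W: "witness H W" and v: "v \<in> verts H" "\<forall>e\<in>edges H. v \<notin> inc H e"
    and fin: "finite (verts H)"
  defines "G \<equiv> H\<lparr>verts := verts H - {v}\<rparr>"
  shows "\<exists>W'. witness G W' \<and> witness_value H W + card (verts G) \<le> witness_value G W' + card (verts H)"
proof -
  have sub: "subgraph G H" unfolding subgraph_def G_def by simp
  have fW: "finite W" using W unfolding witness_def by simp
  define W' where "W' = {p\<in>W. fst p \<noteq> v}"
  define V where "V = {p\<in>W. fst p = v}"
  have reach': "\<forall>p\<in>W'. reachable G (fst p) (snd p)"
    using witness_reachable[OF W] walk_avoid_isolated[OF _ v(2)]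
    unfolding W'_def G_def reachable_def by blast
  have V_reaching: "V \<subseteq> W \<inter> {p. reachable H (fst p) v}"
    unfolding V_def using reachable_refl[OF v(1)] by auto
  have "witness_value H V = card V"
  proof -
    have "dist H (fst p) (snd p) = 0" if "p \<in> V" for p
      using that witness_reachable[OF W] walk_from_isolated[OF _ v(2)] dist_le_walk[OF walk_refl[OF v(1)]]
      unfolding V_def reachable_def by fastforce
    then show ?thesis unfolding witness_value_def by simp
  qed
  moreover have "card V \<le> 1"
    using witness_card_reaching_le_1[OF W, of v] card_mono[OF _ V_reaching] fW by fastforce
  moreover have "W = W' \<union> V" "W' \<inter> V = {}" "finite W'" "finite V"
    using fW unfolding W'_def V_def by auto
  ultimately have "witness_value H W \<le> witness_value H W' + 1"
    using witness_value_Un[of W' V H] by simp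
  also have "\<dots> \<le> witness_value G W' + 1" using witness_value_subgraph_le[OF sub reach'] by simp
  finally have "witness_value H W \<le> witness_value G W' + 1" .
  moreover have "card (verts G) + 1 = card (verts H)"
    using card_Suc_Diff1[OF fin v(1)] unfolding G_def by simp
  moreover have "witness G W'"
    using witness_subgraph[OF witness_subset[OF W] sub reach'] unfolding W'_def by blast
  ultimately show ?thesis by (intro exI[of _ W']) simp
qed

lemma dist_le_across_edge:
  assumes e: "e \<in> edges H" "inc H e = {x, y}"
    and "reachable (del_edges H {e}) a x" "reachable (del_edges H {e}) y b"
  shows "dist H a b \<le> dist (del_edges H {e}) a x + 1 + dist (del_edges H {e}) y b"
proof -
  have "walk H a x (dist (del_edges H {e}) a x)" "walk H y b (dist (del_edges H {e}) y b)"
    using walk_subgraph[OF walk_dist subgraph_del_edges] assms(3,4) by blast+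
  moreover have "walk H x y 1" using walk_edge[OF e] assms(3,4) reachable_verts by fastforce
  ultimately show ?thesis using walk_append dist_le_walk by (metis add.assoc)
qed

lemma witness_del_edge_separating:
  assumes W: "witness H W" and e: "e \<in> edges H" and ab: "(a, b) \<in> W"
    and sep: "\<not> reachable (del_edges H {e}) a b"
  shows "\<exists>W'. witness (del_edges H {e}) W' \<and> witness_value H W \<le> witness_value (del_edges H {e}) W'"
proof -
  let ?G = "del_edges H {e}"
  have sub: "subgraph ?G H" by (rule subgraph_del_edges)
  have fW: "finite W" using W unfolding witness_def by simp
  obtain n where "walk H a b n" using witness_reachable[OF W ab] unfolding reachable_def by auto
  then obtain x y where xy: "inc H e = {x, y}" "reachable ?G a x" "reachable ?G y b"
    using walk_del_edge_cases[of H a b n e] sep by blast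
  have x_a: "reachable H x a" and y_a: "reachable H y a"
    using reachable_subgraph[OF _ sub] xy witness_reachable[OF W ab] reachable_sym reachable_trans
    by (metis fst_conv snd_conv)+
  define W0 where "W0 = W - {(a, b)}"
  have far: "\<not> reachable H (fst q) a" if "q \<in> W0" for q
    using witness_eq[OF W _ ab] that unfolding W0_def by fastforce
  have reach0: "\<forall>q\<in>W0. reachable ?G (fst q) (snd q)"
  proof (rule ballI, rule ccontr)
    fix q assume q: "q \<in> W0" and "\<not> reachable ?G (fst q) (snd q)"
    then obtain z where "z \<in> {x, y}" "reachable ?G (fst q) z"
      using walk_del_edge_cases witness_reachable[OF W] xy(1) unfolding W0_def reachable_def
      by (metis Diff_iff insertI1)
    then show False using far[OF q] reachable_subgraph[OF _ sub] reachable_trans x_a y_a by blast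
  qed
  have W0: "witness ?G W0"
    using witness_subgraph[OF witness_subset[OF W] sub reach0] unfolding W0_def by blast
  have yb: "witness ?G (insert (y, b) W0)" "(y, b) \<notin> W0"
    using witness_insert[OF W0 xy(3)] far reachable_subgraph[OF _ sub] reachable_trans y_a
    by (meson reachable_sym)+
  have "\<not> reachable ?G a y" using sep xy(3) reachable_trans by blast
  moreover have "\<not> reachable ?G a (fst q)" if "q \<in> W0" for q
    using far[OF that] reachable_subgraph[OF _ sub] reachable_sym by blast
  ultimately have ax: "witness ?G (insert (a, x) (insert (y, b) W0))" "(a, x) \<notin> insert (y, b) W0"
    using witness_insert[OF yb(1) xy(2)] by auto
  have "dist H a b \<le> dist ?G a x + 1 + dist ?G y b" using dist_le_across_edge[OF e xy] .
  moreover have "witness_value H W0 \<le> witness_value ?G W0"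
    using witness_value_subgraph_le[OF sub reach0] .
  moreover have "witness_value H W = dist H a b + 1 + witness_value H W0"
    using witness_value_remove[OF fW ab] unfolding W0_def by simp
  moreover have "witness_value ?G (insert (a, x) (insert (y, b) W0)) =
      dist ?G a x + 1 + (dist ?G y b + 1 + witness_value ?G W0)"
    using yb(2) ax(2) fW witness_value_insert unfolding W0_def by (simp del: insert_iff)
  ultimately show ?thesis using ax(1) by (intro exI[of _ "insert (a, x) (insert (y, b) W0)"]) simp
qed

lemma witness_del_edge:
  assumes W: "witness H W" and e: "e \<in> edges H"
  shows "\<exists>W'. witness (del_edges H {e}) W' \<and> witness_value H W \<le> witness_value (del_edges H {e}) W'"
proof (cases "\<forall>p\<in>W. reachable (del_edges H {e}) (fst p) (snd p)")
  case True
  then show ?thesis using witness_subgraph[OF W subgraph_del_edges]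
      witness_value_subgraph_le[OF subgraph_del_edges] by blast
next
  case False
  then show ?thesis using witness_del_edge_separating[OF W e] by auto
qed

lemma (in edge_contraction) witness_contract_image:
  assumes W: "witness H W"
  defines "f \<equiv> \<lambda>p. (merge u w (fst p), merge u w (snd p))"
  shows "witness K (f ` W)" "inj_on f W"
proof -
  have vs: "fst p \<in> verts H" "snd p \<in> verts H" if "p \<in> W" for p
    using reachable_verts[OF witness_reachable[OF W that]] by auto
  show "inj_on f W"
    by (rule inj_onI) (use witness_eq[OF W] reachable_if_merge_eq vs in \<open>auto simp: f_def\<close>)
  show "witness K (f ` W)" unfolding witness_def
  proof (intro conjI ballI impI)
    show "finite (f ` W)" using W unfolding witness_def by simp
  next
    fix p' assume "p' \<in> f ` W"
    then show "reachable K (fst p') (snd p')"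
      using reachable_contract witness_reachable[OF W] by (auto simp: f_def)
  next
    fix p' q' assume "p' \<in> f ` W" "q' \<in> f ` W" "p' \<noteq> q'"
    then obtain p q where pq: "p \<in> W" "q \<in> W" "p' = f p" "q' = f q" "p \<noteq> q" by blast
    show "\<not> reachable K (fst p') (fst q')"
    proof
      assume "reachable K (fst p') (fst q')"
      then have "reachable K (merge u w (fst p)) (merge u w (fst q))" using pq by (simp add: f_def)
      then have "reachable H (fst p) (fst q)" using reachable_lift vs pq by blast
      then show False using witness_eq[OF W] pq by blast
    qed
  qed
qed

text \<open>Distances drop by at most one under the contraction, and only for the unique pair of
  the witness in the component of the contracted edge.\<close>
lemma (in edge_contraction) witness_contract:
  assumes W: "witness H W"
  shows "\<exists>W'. witness K W' \<and> witness_value H W \<le> witness_value K W' + 1"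
proof -
  define f where "f = (\<lambda>p :: nat \<times> nat. (merge u w (fst p), merge u w (snd p)))"
  have fW: "finite W" using W unfolding witness_def by simp
  note image = witness_contract_image[OF W, folded f_def]
  have "witness_value H W \<le>
      (\<Sum>p\<in>W. dist K (fst (f p)) (snd (f p)) + 1 + of_bool (reachable H (fst p) u))"
    unfolding witness_value_def f_def
    using dist_le_dist_contract witness_reachable[OF W] by (intro sum_mono) (simp add: of_bool_def)
  also have "\<dots> = witness_value K (f ` W) + card (W \<inter> {p. reachable H (fst p) u})"
    unfolding witness_value_def sum.reindex[OF image(2)] comp_def sum.distrib using fW by simp
  finally show ?thesis using image(1) witness_card_reaching_le_1[OF W, of u] by fastforce
qed

lemma witness_minor_step:
  assumes wf: "wf_graph H" and st: "minor_step H G" and W: "witness H W"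
  shows "\<exists>W'. witness G W' \<and> witness_value H W + card (verts G) \<le> witness_value G W' + card (verts H)"
  using st unfolding minor_step_def
proof (elim disjE exE bexE conjE)
  fix v assume "v \<in> verts H" "\<forall>e\<in>edges H. v \<notin> inc H e" "G = H\<lparr>verts := verts H - {v}\<rparr>"
  then show ?thesis using witness_del_vertex[OF W] wf unfolding wf_graph_def by blast
next
  fix e assume "e \<in> edges H" "G = H\<lparr>edges := edges H - {e}\<rparr>"
  then show ?thesis using witness_del_edge[OF W] unfolding del_edges_def by fastforce
next
  fix e u w assume e: "e \<in> edges H" "inc H e = {u, w}" "u \<noteq> w"
    and G: "G = \<lparr>verts = verts H - {w}, edges = edges H - {e},
      inc = \<lambda>f. (\<lambda>x. if x = w then u else x) ` inc H f\<rparr>"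
  interpret edge_contraction H u w e using wf e by unfold_locales
  have "G = K" unfolding G contract_def merge_def by simp
  then show ?thesis using witness_contract[OF W] card_verts_contract by fastforce
qed

lemma witness_minor_steps:
  assumes "minor_step\<^sup>*\<^sup>* H G" "wf_graph H" "witness H W"
  shows "wf_graph G \<and>
    (\<exists>W'. witness G W' \<and> witness_value H W + card (verts G) \<le> witness_value G W' + card (verts H))"
  using assms(1)
proof (induction rule: rtranclp_induct)
  case base
  then show ?case using assms(2,3) by blast
next
  case (step G1 G2)
  then obtain W1 where W1: "witness G1 W1"
    "witness_value H W + card (verts G1) \<le> witness_value G1 W1 + card (verts H)" by blast
  obtain W2 where "witness G2 W2" "witness_value G1 W1 + card (verts G2) \<le> witness_value G2 W2 + card (verts G1)"
    using witness_minor_step[OF _ step(2) W1(1)] step(3) by blast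
  then show ?case using W1(2) wf_graph_minor_step[OF _ step(2)] step(3) by fastforce
qed

lemma witness_value_le_diameter:
  assumes "graph_iso G G'" and c: "connected_graph G" and fin: "finite (verts G)"
    and W: "witness G' W"
  shows "witness_value G' W \<le> diameter G + 1"
proof -
  obtain f g where f: "bij_betw f (verts G) (verts G')" and iso: "bij_betw g (edges G) (edges G')"
    "\<forall>e\<in>edges G. inc G' (g e) = f ` inc G e"
    using assms(1) unfolding graph_iso_def by blast
  have close: "reachable G' x y \<and> dist G' x y \<le> diameter G"
    if "x \<in> verts G'" "y \<in> verts G'" for x y
  proof -
    have "x \<in> f ` verts G" "y \<in> f ` verts G" using that f by (simp_all add: bij_betw_def)
    then obtain a b where ab: "a \<in> verts G" "b \<in> verts G" "x = f a" "y = f b" by blast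
    then have "walk G' x y (dist G a b)"
      using walk_graph_iso[OF f iso walk_dist] c unfolding connected_graph_iff_reachable by blast
    then show ?thesis
      using dist_le_walk dist_le_diameter[OF fin ab(1,2)] unfolding reachable_def by fastforce
  qed
  show ?thesis
  proof (cases "W = {}")
    case True
    then show ?thesis unfolding witness_value_def by simp
  next
    case False
    then obtain p where p: "p \<in> W" by blast
    have in_verts: "fst q \<in> verts G' \<and> snd q \<in> verts G'" if "q \<in> W" for q
      using reachable_verts[OF witness_reachable[OF W that]] .
    have "q = p" if "q \<in> W" for q
      using witness_eq[OF W that p] close in_verts that p by blast
    then have "W = {p}" using p by blast
    then show ?thesis using close in_verts[OF p] unfolding witness_value_def by simp
  qed
qed

theorem card_le_sp_add_diameter:
  assumes "wf_graph G" "connected_graph G" and H: "wf_graph H" and "is_minor G H"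
  shows "card (verts G) \<le> sp H + 1 + diameter G"
proof -
  obtain G' where G': "minor_step\<^sup>*\<^sup>* H G'" "graph_iso G G'"
    using assms(4) unfolding is_minor_def by blast
  obtain W where W: "witness H W" "witness_value H W = usp H" using witness_usp[OF H] by blast
  obtain W' where W': "witness G' W'" "usp H + card (verts G') \<le> witness_value G' W' + card (verts H)"
    using witness_minor_steps[OF G'(1) H W(1)] W(2) by auto
  have "card (verts G') = card (verts G)"
    using G'(2) bij_betw_same_card unfolding graph_iso_def by metis
  moreover have "witness_value G' W' \<le> diameter G + 1"
    using witness_value_le_diameter[OF G'(2) assms(2) _ W'(1)] assms(1) unfolding wf_graph_def by blast
  ultimately show ?thesis using W'(2) usp_le_card[OF H] unfolding sp_def by linarith
qed

lemma sfloor_le_sp: "wf_graph K \<Longrightarrow> is_minor G K \<Longrightarrow> sfloor G \<le> sp K"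
  unfolding sfloor_def by (rule Least_le) blast

lemma card_le_sfloor_add_diameter:
  assumes "wf_graph G" "connected_graph G"
  shows "card (verts G) \<le> sfloor G + 1 + diameter G"
proof -
  have "\<exists>H. wf_graph H \<and> is_minor G H \<and> sp H = sfloor G"
    unfolding sfloor_def by (rule LeastI_ex) (use assms(1) is_minor_refl in blast)
  then show ?thesis using card_le_sp_add_diameter assms by metis
qed

section \<open>Trees\<close>

lemma tree_no_parallel_edges:
  assumes t: "is_tree T" and ef: "e \<in> edges T" "f \<in> edges T" "f \<noteq> e"
  shows "inc T f \<noteq> inc T e"
proof
  assume eq: "inc T f = inc T e"
  obtain u w where uw: "inc T e = {u, w}" "u \<noteq> w" "u \<in> verts T" "w \<in> verts T"
    using wf_graph_incE t ef(1) unfolding is_tree_def by metis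
  have "is_cycle T [u, w] [e, f]"
    unfolding is_cycle_def
  proof (intro conjI allI impI)
    fix i assume "i < length [e, f]"
    then have "i = 0 \<or> i = 1" by auto
    then show "[e, f] ! i \<in> edges T" "inc T ([e, f] ! i) = {[u, w] ! i, [u, w] ! (Suc i mod length [u, w])}"
      using ef eq uw by (auto simp: insert_commute)
  qed (use ef uw in auto)
  then show False using t unfolding is_tree_def by blast
qed

lemma tree_no_isolated:
  assumes "is_tree T" "v \<in> verts T" "\<forall>e\<in>edges T. v \<notin> inc T e"
  shows "verts T = {v}"
  using assms walk_from_isolated unfolding is_tree_def connected_graph_iff_reachable reachable_def
  by blast

lemma usp_tree_ge:
  assumes t: "is_tree T"
  shows "diameter T + 1 \<le> usp T"
proof -
  have wf: "wf_graph T" and c: "connected_graph T" and acyclic: "\<not> (\<exists>vs es. is_cycle T vs es)"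
    using t unfolding is_tree_def by blast+
  obtain vs es where "diametric_path T vs es" using diametric_path_exists[OF wf c] .
  then have p: "is_path T vs es" "length es = diameter T" unfolding diametric_path_def by blast+
  have "length vs \<le> usp T"
    using usp_ge[OF _ acyclic_path_is_usp[OF acyclic p(1)]] wf unfolding wf_graph_def by blast
  then show ?thesis using path_length[OF p(1)] p(2) by simp
qed

lemma sfloor_tree:
  assumes t: "is_tree T"
  shows "sfloor T + 1 + diameter T = card (verts T)"
proof -
  have wf: "wf_graph T" and "connected_graph T" using t unfolding is_tree_def by blast+
  then have "card (verts T) \<le> sfloor T + 1 + diameter T" by (rule card_le_sfloor_add_diameter)
  moreover have "sfloor T \<le> sp T" using sfloor_le_sp[OF wf is_minor_refl] .
  ultimately show ?thesis using usp_le_card[OF wf] usp_tree_ge[OF t] unfolding sp_def by linarith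
qed

theorem not_sfloor_minor_minimal_if_common_edge:
  assumes t: "is_tree T" and e: "e \<in> edges T"
    and common: "\<forall>vs es. diametric_path T vs es \<longrightarrow> e \<in> set es"
  shows "\<not> sfloor_minor_minimal T"
proof -
  have wf: "wf_graph T" and c: "connected_graph T" using t unfolding is_tree_def by blast+
  obtain u w where "inc T e = {u, w}" "u \<noteq> w" using wf_graph_incE[OF wf e] by metis
  then interpret edge_contraction T u w e using wf e by unfold_locales
  have simple: "\<forall>f\<in>edges T. f \<noteq> e \<longrightarrow> inc T f \<noteq> inc T e"
    using tree_no_parallel_edges[OF t e] by blast
  have step: "minor_step T K" using minor_step_contract[OF e inc_e uw simple] .
  have wfK: "wf_graph K" using wf_graph_contract[OF simple] .
  have "card (verts K) \<le> sfloor K + 1 + diameter K"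
    using card_le_sfloor_add_diameter[OF wfK connected_contract[OF c]] .
  moreover have "sfloor K \<le> sp T" using sfloor_le_sp[OF wf is_minor_minor_step[OF step]] .
  ultimately have "sfloor K = sfloor T"
    using card_verts_contract diameter_contract_lt[OF c common] sfloor_tree[OF t] usp_tree_ge[OF t]
      usp_le_card[OF wf]
    unfolding sp_def by linarith
  then show ?thesis
    using is_proper_minor_minor_step[OF step] wfK unfolding sfloor_minor_minimal_def by metis
qed

text \<open>Moving \<open>e\<close> to join \<open>c\<close> to the far side \<open>b\<close> of the cut it defines keeps every edge on
  the side of \<open>c\<close> a bridge: a detour around such an edge could only use the moved \<open>e\<close> by
  passing through \<open>b\<close>.\<close>
lemma bridge_after_moving_edge:
  assumes acyclic: "\<not> (\<exists>vs es. is_cycle T vs es)"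
    and f: "f \<in> edges T" "inc T f = {x, y}" "x \<noteq> y"
    and near: "reachable (del_edges T {e}) c x" "reachable (del_edges T {e}) c y"
    and sep: "\<not> reachable (del_edges T {e}) c b"
  shows "\<not> reachable (del_edges (T\<lparr>inc := (inc T)(e := {c, b})\<rparr>) {f}) x y"
proof
  define K where "K = T\<lparr>inc := (inc T)(e := {c, b})\<rparr>"
  let ?D = "del_edges T {e}" and ?KD = "del_edges K ({f} \<union> {e})"
  have sub_f: "subgraph ?KD (del_edges T {f})" and sub_e: "subgraph ?KD ?D"
    unfolding subgraph_def K_def by auto
  assume "reachable (del_edges (T\<lparr>inc := (inc T)(e := {c, b})\<rparr>) {f}) x y"
  then obtain n where "walk (del_edges K {f}) x y n" unfolding reachable_def K_def by blast
  from walk_del_edge_cases[OF this, of e]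
  have "reachable ?KD x y \<or> (\<exists>z z'. {c, b} = {z, z'} \<and> reachable ?KD x z \<and> reachable ?KD z' y)"
    unfolding del_edges_del_edges by (simp add: K_def)
  then show False
  proof
    assume "reachable ?KD x y"
    then have "reachable (del_edges T {f}) x y" using reachable_subgraph[OF _ sub_f] by blast
    then show False using acyclic_edge_is_bridge[OF acyclic f] by blast
  next
    assume "\<exists>z z'. {c, b} = {z, z'} \<and> reachable ?KD x z \<and> reachable ?KD z' y"
    then obtain z z' where zz': "{c, b} = {z, z'}" "reachable ?D x z" "reachable ?D z' y"
      using reachable_subgraph[OF _ sub_e] by blast
    then have "reachable ?D c z" "reachable ?D c z'"
      using near reachable_sym reachable_trans by blast+
    then show False using zz'(1) sep by (auto simp: doubleton_eq_iff)
  qed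
qed

lemma usp_move_edge_to_path_end:
  assumes acyclic: "\<not> (\<exists>vs es. is_cycle T vs es)" and e: "e \<in> edges T"
    and p: "is_path T vs es" "e \<notin> set es" and b: "b \<in> verts T"
    and sep: "\<not> reachable (del_edges T {e}) (last vs) b"
  shows "is_usp (T\<lparr>inc := (inc T)(e := {last vs, b})\<rparr>) (vs @ [b]) (es @ [e])"
proof -
  define K where "K = T\<lparr>inc := (inc T)(e := {last vs, b})\<rparr>"
  let ?D = "del_edges T {e}"
  have len: "length vs = length es + 1" using path_length[OF p(1)] .
  have pD: "is_path ?D vs es" using p by (auto simp: path_del_edges_iff)
  have near: "reachable ?D (last vs) z" if "z \<in> set vs" for z
    using path_reachable_mem[OF pD that] path_reachable[OF pD] reachable_sym reachable_trans by blast
  have "subgraph ?D K" unfolding subgraph_def K_def by auto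
  moreover have "b \<notin> set vs" using near sep by blast
  ultimately have "is_path K (vs @ [b]) (es @ [e])"
    using path_snoc[OF path_subgraph[OF pD]] b e unfolding K_def by simp
  moreover have "\<not> reachable (del_edges K {(es @ [e]) ! i}) ((vs @ [b]) ! i) ((vs @ [b]) ! Suc i)"
    if i: "i < length (es @ [e])" for i
  proof (cases "i < length es")
    case False
    then have "i = length es" using i by simp
    moreover have "vs \<noteq> []" using len by auto
    ultimately have "(es @ [e]) ! i = e" "(vs @ [b]) ! i = last vs" "(vs @ [b]) ! Suc i = b"
      using len by (simp_all add: nth_append last_conv_nth)
    moreover have "subgraph (del_edges K {e}) ?D" unfolding subgraph_def K_def by auto
    ultimately show ?thesis using sep reachable_subgraph by metis
  next
    case True
    then have "es ! i \<in> edges T" "inc T (es ! i) = {vs ! i, vs ! Suc i}" "vs ! i \<noteq> vs ! Suc i"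
      using p(1) path_nth_neq unfolding is_path_def by auto
    then show ?thesis using bridge_after_moving_edge[OF acyclic] near sep True len
      unfolding K_def by (simp add: nth_append)
  qed
  ultimately show ?thesis using usp_if_bridges unfolding K_def by blast
qed

lemma sp_move_edge_to_path_end:
  assumes t: "is_tree T" and e: "e \<in> edges T" and p: "is_path T vs es" "e \<notin> set es"
  obtains K where "wf_graph K" "minor_step K (del_edges K {e})"
    "same_graph (del_edges T {e}) (del_edges K {e})" "sp K + length vs + 1 \<le> card (verts T)"
proof -
  have wf: "wf_graph T" and c: "connected_graph T" and acyclic: "\<not> (\<exists>vs es. is_cycle T vs es)"
    using t unfolding is_tree_def by blast+
  let ?D = "del_edges T {e}"
  have last_in: "last vs \<in> verts T" using p(1) path_walk walk_verts by blast
  obtain s b where sb: "inc T e = {s, b}" "reachable ?D (last vs) s"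
  proof -
    obtain x y where "inc T e = {x, y}" "x \<in> verts T" using wf_graph_incE[OF wf e] by metis
    moreover obtain n where "walk T (last vs) x n"
      using c last_in \<open>x \<in> verts T\<close> unfolding connected_graph_iff_reachable reachable_def by blast
    ultimately show ?thesis using walk_del_edge_cases[of T "last vs" x n e] that by blast
  qed
  have "s \<noteq> b" using wf e sb(1) unfolding wf_graph_def by fastforce
  then have sep: "\<not> reachable ?D (last vs) b"
    using acyclic_edge_is_bridge[OF acyclic e sb(1)] sb(2) reachable_sym reachable_trans by blast
  have b: "b \<in> verts T" using wf e sb(1) unfolding wf_graph_def by blast
  define K where "K = T\<lparr>inc := (inc T)(e := {last vs, b})\<rparr>"
  have "last vs \<noteq> b" using sep reachable_refl last_in by auto
  then have "wf_graph K" using wf last_in b unfolding K_def wf_graph_def by auto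
  moreover have "minor_step K (del_edges K {e})" using minor_step_del_edge e unfolding K_def by simp
  moreover have "same_graph ?D (del_edges K {e})" unfolding K_def same_graph_iff by auto
  moreover have "sp K + length (vs @ [b]) \<le> card (verts K)"
    using sp_add_usp_le[OF \<open>wf_graph K\<close>] usp_move_edge_to_path_end[OF acyclic e p b sep] unfolding K_def
    by blast
  ultimately show ?thesis using that unfolding K_def by simp
qed

lemma sp_bound_of_proper_minor_of_tree:
  assumes t: "is_tree T" and avoid: "\<forall>e\<in>edges T. \<exists>vs es. diametric_path T vs es \<and> e \<notin> set es"
    and first: "minor_step T G1" and rest: "minor_step\<^sup>*\<^sup>* G1 G'" and iso: "graph_iso H G'"
  shows "\<exists>K. wf_graph K \<and> is_minor H K \<and> sp K + diameter T + 2 \<le> card (verts T)"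
  using first[unfolded minor_step_def]
proof (elim disjE exE bexE conjE)
  fix v assume "v \<in> verts T" "\<forall>e\<in>edges T. v \<notin> inc T e" "verts T \<noteq> {v}"
  then show ?thesis using tree_no_isolated[OF t] by blast
next
  fix e assume e: "e \<in> edges T" and G1: "G1 = T\<lparr>edges := edges T - {e}\<rparr>"
  obtain vs es where p: "is_path T vs es" "length es = diameter T" "e \<notin> set es"
    using avoid e unfolding diametric_path_def by blast
  obtain K where K: "wf_graph K" "minor_step K (del_edges K {e})"
    "same_graph (del_edges T {e}) (del_edges K {e})" "sp K + length vs + 1 \<le> card (verts T)"
    using sp_move_edge_to_path_end[OF t e p(1,3)] by blast
  obtain K' where "minor_step\<^sup>*\<^sup>* (del_edges K {e}) K'" "same_graph G' K'"
    using same_graph_minor_steps[OF rest] K(3) G1 unfolding del_edges_def by blast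
  then have "is_minor H K"
    using K(2) graph_iso_same_graph[OF iso] converse_rtranclp_into_rtranclp unfolding is_minor_def
    by metis
  then show ?thesis using K(1,4) path_length[OF p(1)] p(2) by auto
next
  fix e u w assume e: "e \<in> edges T" "inc T e = {u, w}" "u \<noteq> w"
    and G1: "G1 = \<lparr>verts = verts T - {w}, edges = edges T - {e},
      inc = \<lambda>f. (\<lambda>x. if x = w then u else x) ` inc T f\<rparr>"
  have wf: "wf_graph T" and acyclic: "\<not> (\<exists>vs es. is_cycle T vs es)"
    using t unfolding is_tree_def by blast+
  interpret edge_contraction T u w e using wf e by unfold_locales
  have K: "G1 = K" unfolding G1 contract_def merge_def by simp
  obtain vs es where p: "is_path T vs es" "length es = diameter T" "e \<notin> set es"
    using avoid e unfolding diametric_path_def by blast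
  have "wf_graph K" using wf_graph_minor_step[OF wf first] K by simp
  then have "sp K + length vs \<le> card (verts K)"
    using sp_add_usp_le usp_contract_path[OF acyclic p(1,3)] by fastforce
  moreover have "is_minor H K" using rest iso K unfolding is_minor_def by blast
  ultimately show ?thesis
    using \<open>wf_graph K\<close> card_verts_contract path_length[OF p(1)] p(2) by (intro exI[of _ K]) auto
qed

theorem sfloor_minor_minimal_if_no_common_edge:
  assumes t: "is_tree T" and avoid: "\<forall>e\<in>edges T. \<exists>vs es. diametric_path T vs es \<and> e \<notin> set es"
  shows "sfloor_minor_minimal T"
  unfolding sfloor_minor_minimal_def
proof (intro allI impI)
  fix H assume "wf_graph H \<and> is_proper_minor H T"
  then obtain G1 G' where "minor_step T G1" "minor_step\<^sup>*\<^sup>* G1 G'" "graph_iso H G'"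
    unfolding is_proper_minor_def by (metis tranclpD)
  then obtain K where "wf_graph K" "is_minor H K" "sp K + diameter T + 2 \<le> card (verts T)"
    using sp_bound_of_proper_minor_of_tree[OF t avoid] by blast
  then show "sfloor H \<noteq> sfloor T" using sfloor_le_sp sfloor_tree[OF t] by fastforce
qed

theorem corollary4p4:
  assumes "is_tree T"
  shows "sfloor_minor_minimal T \<longleftrightarrow>
    \<not> (\<exists>e\<in>edges T. \<forall>vs es. diametric_path T vs es \<longrightarrow> e \<in> set es)"
  using not_sfloor_minor_minimal_if_common_edge[OF assms]
    sfloor_minor_minimal_if_no_common_edge[OF assms] by blast

end
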